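(* Let $n=em$ with $e,m\geq 1$ integers, and let $k$ be a positive integer. Let $\alpha,\beta\in\mathbb{T}_e^*$ with $\beta=\alpha^2$, and let $c_i\in\mathbb{Z}_2=\{0,1\}$ for $1\leq i\leq\lfloor\frac{m-1}{2}\rfloor$. Define the quaternary function $$Q(x)=\mathrm{Tr}_1^n\Big(\alpha x+2\sum_{i=1}^{\lfloor\frac{m-1}{2}\rfloor}c_i\,\beta\, x^{1+2^{eki}}\Big),\qquad x\in\mathbb{T}.$$ Then $Q$ is a quaternary bent function if and only if $\gcd(c(x^k),x^m-1)=1$ in $\mathbb{F}_2[x]$, where $$c(x)=1+\sum_{i=1}^{\lfloor\frac{m-1}{2}\rfloor}c_i\,(x^i+x^{m-i})\in\mathbb{F}_2[x].$$
   Context: $GR(4,n)$ denotes the Galois ring of characteristic 4 with $4^n$ elements, i.e. $GR(4,n)\cong\mathbb{Z}_4[\xi]$ where $\xi$ is a root of order $2^n-1$ of a monic degree-$n$ polynomial over $\mathbb{Z}_4$ whose reduction mod 2 is primitive over $\mathbb{F}_2$. Its Teichmüller set is $\mathbb{T}=\{0,1,\xi,\dots,\xi^{2^n-2}\}$, the set of roots of $x^{2^n}=x$ in $GR(4,n)$. Every $z\in GR(4,n)$ is uniquely $z=x+2y$ with $x,y\in\mathbb{T}$, and $\mathrm{Tr}_1^n(z)=\sum_{j=0}^{n-1}(x^{2^j}+y^{2^j})\in\mathbb{Z}_4$. $\mathbb{T}_e^*$ denotes the set of nonzero $x\in\mathbb{T}$ with $x^{2^e}=x$. Let $\mu:GR(4,n)\to\mathbb{F}_{2^n}$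 be reduction modulo 2; it restricts to a bijection $\mathbb{T}\to\mathbb{F}_{2^n}$, so any function $Q:\mathbb{T}\to\mathbb{Z}_4$ is viewed as the function $Q\circ\mu^{-1}:\mathbb{F}_{2^n}\to\mathbb{Z}_4$. A function $f:\mathbb{F}_{2^n}\to\mathbb{Z}_4$ is quaternary bent if $|\hat f(a)|=2^{n/2}$ for all $a\in\mathbb{F}_{2^n}$, where $\hat f(a)=\sum_{x\in\mathbb{F}_{2^n}} \mathrm{i}^{f(x)}(-1)^{\mathrm{tr}_1^n(ax)}$, $\mathrm{i}=\sqrt{-1}$, and $\mathrm{tr}_1^n(x)=\sum_{j=0}^{n-1}x^{2^j}$ is the absolute trace of $\mathbb{F}_{2^n}$. *)

theory Defs
  imports Complex_Main "HOL-Library.Z2" "HOL-Computational_Algebra.Polynomial"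
begin

(* GR(4,n), characterised up to isomorphism: a finite commutative ring of
   characteristic 4 with 4^n elements whose non-units are exactly the multiples
   of 2 (i.e. a finite local ring with maximal ideal 2R). *)
definition is_GR4 :: "nat \<Rightarrow> 'r::{comm_ring_1,finite} itself \<Rightarrow> bool" where
  "is_GR4 n _ \<longleftrightarrow> card (UNIV::'r set) = 4 ^ n \<and> (4::'r) = 0 \<and> (2::'r) \<noteq> 0 \<and>
     (\<forall>z::'r. (\<nexists>y. z = 2 * y) \<longrightarrow> (\<exists>w. z * w = 1))"

definition teich :: "nat \<Rightarrow> 'r::comm_ring_1 set" where
  "teich n = {x. x ^ (2 ^ n) = x}"

definition teich_star :: "nat \<Rightarrow> nat \<Rightarrow> 'r::comm_ring_1 set" where
  "teich_star n e = {x \<in> teich n. x \<noteq> 0 \<and> x ^ (2 ^ e) = x}"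

definition tx :: "nat \<Rightarrow> 'r::comm_ring_1 \<Rightarrow> 'r" where
  "tx n z = (THE x. x \<in> teich n \<and> (\<exists>y\<in>teich n. z = x + 2 * y))"

definition ty :: "nat \<Rightarrow> 'r::comm_ring_1 \<Rightarrow> 'r" where
  "ty n z = (THE y. y \<in> teich n \<and> z = tx n z + 2 * y)"

(* Trace Tr_1^n : GR(4,n) -> Z4 (as an element of the ring) *)
definition GTr :: "nat \<Rightarrow> 'r::comm_ring_1 \<Rightarrow> 'r" where
  "GTr n z = (\<Sum>j<n. tx n z ^ (2 ^ j) + 2 * ty n z ^ (2 ^ j))"

(* the element of Z4 = {0,1,2,3} represented by a ring element of the prime subring *)
definition z4_val :: "'r::comm_ring_1 \<Rightarrow> int" where
  "z4_val z = (THE k. k \<in> {0..3} \<and> of_int k = z)"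

definition ftr :: "nat \<Rightarrow> 'f::field \<Rightarrow> 'f" where
  "ftr n x = (\<Sum>j<n. x ^ (2 ^ j))"

definition walsh4 :: "nat \<Rightarrow> ('f::{field,finite} \<Rightarrow> int) \<Rightarrow> 'f \<Rightarrow> complex" where
  "walsh4 n f a = (\<Sum>x\<in>UNIV. \<i> ^ nat (f x mod 4) *
                       (if ftr n (a * x) = 0 then 1 else -1))"

definition quaternary_bent :: "nat \<Rightarrow> ('f::{field,finite} \<Rightarrow> int) \<Rightarrow> bool" where
  "quaternary_bent n f \<longleftrightarrow> (\<forall>a. cmod (walsh4 n f a) = 2 powr (real n / 2))"

definition cpoly :: "nat \<Rightarrow> (nat \<Rightarrow> bool) \<Rightarrow> bit poly" where
  "cpoly m c = 1 + (\<Sum>i\<in>{1..(m - 1) div 2}. if c i then monom 1 i + monom 1 (m - i) else 0)"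

definition Qfun :: "nat \<Rightarrow> nat \<Rightarrow> nat \<Rightarrow> nat \<Rightarrow> (nat \<Rightarrow> bool) \<Rightarrow> 'r::comm_ring_1 \<Rightarrow> 'r \<Rightarrow> 'r \<Rightarrow> int" where
  "Qfun n e m k c \<alpha> \<beta> x = z4_val (GTr n (\<alpha> * x + 2 *
      (\<Sum>i\<in>{1..(m - 1) div 2}. (if c i then 1 else 0) * \<beta> * x ^ (1 + 2 ^ (e * k * i)))))"

end

(*
  Reduce modulo 2.  For the Teichmueller lift t of y, i^Q(t) is a function F(y) on F_{2^n} with
  F(x + z) = F(x) F(z) (-1)^tr(x D(z)), where D(z) = mu(beta) L(z) and L is the 2^e-linearised
  polynomial associated with c(x^k).  Expanding |W(a)|^2 for the Walsh transform W of F leaves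
  2^n times a sum over ker D, on which F is a character; so Q is bent iff D has trivial kernel.
  Finally, L has no nonzero root in F_{2^n} iff c(x^k) is coprime to x^m - 1: products of
  polynomials correspond to compositions of their linearised associates, and x^m - 1 linearises
  to z^(2^n) - z, which vanishes on the whole field.
*)

theory Submission
  imports Defs
begin

section \<open>Sums over conjugates\<close>

lemma square_sum_lessThan:
  fixes u :: "nat \<Rightarrow> 'a::comm_ring_1"
  shows "(\<Sum>j<n. u j)^2 = (\<Sum>j<n. u j ^ 2) + 2 * (\<Sum>j<n. \<Sum>i<j. u i * u j)"
proof (induction n)
  case (Suc n)
  have "(\<Sum>j<Suc n. \<Sum>i<j. u i * u j) = (\<Sum>j<n. \<Sum>i<j. u i * u j) + (\<Sum>i<n. u i) * u n"
    by (simp add: sum_distrib_right)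
  then show ?case
    using Suc by (simp add: power2_eq_square algebra_simps)
qed simp

lemma pair_sum_cross:
  fixes u v :: "nat \<Rightarrow> 'a::comm_ring_1"
  shows "(\<Sum>j<n. \<Sum>i<j. u i * v j + v i * u j) = (\<Sum>j<n. u j) * (\<Sum>j<n. v j) - (\<Sum>j<n. u j * v j)"
proof (induction n)
  case (Suc n)
  have "(\<Sum>i<n. u i * v n + v i * u n) = (\<Sum>i<n. u i) * v n + (\<Sum>i<n. v i) * u n"
    by (simp add: sum.distrib sum_distrib_right)
  then show ?case
    using Suc by (simp add: algebra_simps)
qed simp

lemma sum_lessThan_Suc_periodic:
  fixes u :: "nat \<Rightarrow> 'a::comm_ring_1"
  assumes "u n = u 0"
  shows "(\<Sum>j<n. u (Suc j)) = (\<Sum>j<n. u j)"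
  using sum.lessThan_Suc_shift[of u n] assms by (simp add: algebra_simps)

lemma pair_sum_Suc_periodic:
  fixes u :: "nat \<Rightarrow> 'a::comm_ring_1"
  assumes "u n = u 0"
  shows "(\<Sum>j<n. \<Sum>i<j. u (Suc i) * u (Suc j)) = (\<Sum>j<n. \<Sum>i<j. u i * u j)"
proof -
  have "(\<Sum>j<Suc n. \<Sum>i<j. u i * u j) = (\<Sum>j<n. \<Sum>i<Suc j. u i * u (Suc j))"
    by (simp only: sum.lessThan_Suc_shift) simp
  also have "\<dots> = u 0 * (\<Sum>j<n. u (Suc j)) + (\<Sum>j<n. \<Sum>i<j. u (Suc i) * u (Suc j))"
    by (simp only: sum.lessThan_Suc_shift) (simp add: sum.distrib sum_distrib_left)
  finally have "(\<Sum>j<n. \<Sum>i<j. u i * u j) + u n * (\<Sum>j<n. u j)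
      = u 0 * (\<Sum>j<n. u (Suc j)) + (\<Sum>j<n. \<Sum>i<j. u (Suc i) * u (Suc j))"
    by (simp add: sum_distrib_left mult.commute)
  then show ?thesis
    using assms sum_lessThan_Suc_periodic[OF assms] by simp
qed

section \<open>Powers of two and characteristic two\<close>

lemma power_two_pow_mod:
  assumes "(y::'a::comm_ring_1) ^ (2 ^ n) = y"
  shows "y ^ (2 ^ a) = y ^ (2 ^ (a mod n))"
proof -
  have "y ^ (2 ^ (n * q + r)) = y ^ (2 ^ r)" for q r
  proof (induction q)
    case (Suc q)
    have "y ^ (2 ^ (n * Suc q + r)) = (y ^ (2 ^ n)) ^ (2 ^ (n * q + r))"
      by (simp add: power_mult[symmetric] power_add[symmetric] algebra_simps)
    then show ?case
      using Suc assms by simp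
  qed simp
  from this[of "a div n" "a mod n"] show ?thesis by simp
qed

lemma power_two_pow_mult_fixed:
  assumes "(y::'a::comm_ring_1) ^ (2 ^ e) = y"
  shows "y ^ (2 ^ (e * j)) = y"
  using power_two_pow_mod[OF assms, of "e * j"] by simp

lemma power_two_pow_Suc: "(y::'a::monoid_mult) ^ (2 ^ Suc j) = (y ^ (2 ^ j)) ^ 2"
  by (simp add: power_mult[symmetric] mult.commute)

lemma power_two_pow_Suc': "(y::'a::monoid_mult) ^ (2 ^ Suc j) = (y ^ 2) ^ (2 ^ j)"
  by (simp add: power_mult[symmetric])

lemma char2_add_self:
  assumes "(2::'a::comm_ring_1) = 0"
  shows "(x::'a) + x = 0"
  using assms by (metis mult_2 mult_zero_left)

lemma char2_diff:
  assumes "(2::'a::comm_ring_1) = 0"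
  shows "(x::'a) - y = x + y"
  using char2_add_self[OF assms, of y] by (simp add: diff_eq_eq algebra_simps)

lemma char2_add_power_two_pow:
  assumes "(2::'a::comm_ring_1) = 0"
  shows "((x::'a) + y) ^ (2 ^ j) = x ^ (2 ^ j) + y ^ (2 ^ j)"
proof (induction j)
  case (Suc j)
  have "((x + y) ^ (2 ^ j)) ^ 2 = (x ^ (2 ^ j)) ^ 2 + (y ^ (2 ^ j)) ^ 2 + 2 * x ^ (2 ^ j) * y ^ (2 ^ j)"
    unfolding Suc by (simp add: power2_eq_square algebra_simps)
  then show ?case
    using assms by (simp add: power_mult[symmetric] mult.commute)
qed simp

lemma char2_sum_power_two_pow:
  assumes "(2::'a::comm_ring_1) = 0"
  shows "(\<Sum>i\<in>A. (f i::'a)) ^ (2 ^ j) = (\<Sum>i\<in>A. f i ^ (2 ^ j))"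
  by (induction A rule: infinite_finite_induct)
     (simp_all add: char2_add_power_two_pow[OF assms] zero_power)

section \<open>Finite fields of order 2^n\<close>

lemma finite_field_power_card:
  fixes y :: "'f::{field,finite}"
  shows "y ^ card (UNIV::'f set) = y"
proof (cases "y = 0")
  case False
  define U where "U = UNIV - {0::'f}"
  have "(\<Prod>x\<in>U. y * x) = (\<Prod>x\<in>U. x)"
    by (rule prod.reindex_bij_witness[where i="\<lambda>x. x / y" and j="\<lambda>x. y * x"])
       (use False in \<open>auto simp: U_def\<close>)
  moreover have "(\<Prod>x\<in>U. y * x) = y ^ card U * (\<Prod>x\<in>U. x)"
    by (simp add: prod.distrib)
  moreover have "(\<Prod>x\<in>U. x) \<noteq> 0"
    by (simp add: U_def)
  ultimately have "y ^ card U = 1"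
    by simp
  moreover have "card (UNIV::'f set) = Suc (card U)"
    using finite_UNIV_card_ge_0[where 'a='f] by (simp add: U_def card_Diff_singleton)
  ultimately show ?thesis
    by simp
qed (simp add: zero_power finite_UNIV_card_ge_0)

lemma exists_not_root_two_power_sum:
  fixes A :: "nat \<Rightarrow> 'f::{field,finite}"
  assumes "A d \<noteq> 0" "e \<ge> 1" "2 ^ (e * d) < card (UNIV::'f set)"
  shows "\<exists>z. (\<Sum>j\<le>d. A j * z ^ (2 ^ (e * j))) \<noteq> 0"
proof (rule ccontr)
  assume all_roots: "\<nexists>z. (\<Sum>j\<le>d. A j * z ^ (2 ^ (e * j))) \<noteq> 0"
  define p where "p = (\<Sum>j\<le>d. monom (A j) (2 ^ (e * j)))"
  have "2 ^ (e * j) = (2::nat) ^ (e * d) \<longleftrightarrow> j = d" for j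
    using assms(2) by simp
  then have "coeff p (2 ^ (e * d)) = A d"
    by (simp add: p_def coeff_sum)
  then have "p \<noteq> 0"
    using assms(1) by auto
  have "degree p \<le> 2 ^ (e * d)"
    unfolding p_def
  proof (rule degree_sum_le)
    fix j assume "j \<in> {..d}"
    then have "(2::nat) ^ (e * j) \<le> 2 ^ (e * d)"
      by (intro power_increasing) auto
    then show "degree (monom (A j) (2 ^ (e * j))) \<le> 2 ^ (e * d)"
      using degree_monom_le order_trans by blast
  qed simp
  moreover have "poly p x = (\<Sum>j\<le>d. A j * x ^ (2 ^ (e * j)))" for x
    by (simp add: p_def poly_sum poly_monom)
  then have "{x. poly p x = 0} = UNIV"
    using all_roots by auto
  then have "card (UNIV::'f set) \<le> degree p"
    using card_poly_roots_bound[OF \<open>p \<noteq> 0\<close>] by simp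
  ultimately show False
    using assms(3) by simp
qed

lemma sum_UNIV_add_shift:
  fixes g :: "'a::{ab_group_add,finite} \<Rightarrow> 'b::comm_monoid_add"
  shows "(\<Sum>x\<in>UNIV. g (x + a)) = (\<Sum>x\<in>UNIV. g x)"
  by (rule sum.reindex_bij_witness[where i="\<lambda>x. x - a" and j="\<lambda>x. x + a"]) auto

lemma cmod_eq_two_powr_half_iff: "cmod (w::complex) = 2 powr (real n / 2) \<longleftrightarrow> cnj w * w = 2 ^ n"
proof -
  have "2 powr (real n / 2) = sqrt (2 ^ n)"
    by (simp add: powr_half_sqrt_powr powr_realpow)
  moreover have "cmod w = sqrt (2 ^ n) \<longleftrightarrow> (cmod w) ^ 2 = 2 ^ n"
    using real_sqrt_unique[of "cmod w" "2 ^ n"] by auto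
  moreover have "(cmod w) ^ 2 = 2 ^ n \<longleftrightarrow> complex_of_real ((cmod w) ^ 2) = complex_of_real (2 ^ n)"
    by (simp only: of_real_eq_iff)
  moreover have "complex_of_real ((cmod w) ^ 2) = cnj w * w"
    unfolding complex_norm_square by (simp add: mult.commute)
  ultimately show ?thesis
    by simp
qed

lemma idempotent_field_cases:
  assumes "(t::'f::field) ^ 2 = t"
  shows "t = 0 \<or> t = 1"
proof -
  have "t * (t - 1) = 0"
    using assms by (simp add: power2_eq_square algebra_simps)
  then show ?thesis by simp
qed

lemma ftr_zero [simp]: "ftr n (0::'f::field) = 0"
  by (simp add: ftr_def zero_power)

definition ftr2 :: "nat \<Rightarrow> 'f::field \<Rightarrow> 'f" where
  "ftr2 n y = (\<Sum>j<n. \<Sum>i<j. y ^ (2 ^ i) * y ^ (2 ^ j))"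

(* (-1)^y for y in the prime field; only ever applied to traces, which lie there. *)
definition minus_one_pow :: "'f::field \<Rightarrow> complex" where
  "minus_one_pow y = (if y = 0 then 1 else -1)"

(* For the Teichmueller lift t of y, Tr_1^n(t) = tr(y) + 2 ftr2(y) mod 4, so this is i^Tr_1^n(t). *)
definition i_pow_trace :: "nat \<Rightarrow> 'f::field \<Rightarrow> complex" where
  "i_pow_trace n y = (if ftr n y = 0 then 1 else \<i>) * minus_one_pow (ftr2 n y)"

lemma minus_one_pow_square [simp]: "minus_one_pow y * minus_one_pow y = 1"
  by (simp add: minus_one_pow_def)

locale gf2n =
  fixes n :: nat and field_type :: "'f::{field,finite} itself"
  assumes card_field: "card (UNIV::'f set) = 2 ^ n"
    and char2: "(2::'f) = 0"
begin

lemma power_two_pow_n [simp]: "(y::'f) ^ (2 ^ n) = y"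
  using finite_field_power_card[of y] card_field by simp

lemma n_pos: "n \<ge> 1"
proof (rule ccontr)
  assume "\<not> n \<ge> 1"
  then have "card (UNIV::'f set) = 1"
    using card_field by simp
  moreover have "card {0, 1::'f} \<le> card (UNIV::'f set)"
    by (rule card_mono) auto
  ultimately show False by simp
qed

lemma ftr_add: "ftr n (x + y) = ftr n x + ftr n (y::'f)"
  by (simp add: ftr_def char2_add_power_two_pow[OF char2] sum.distrib)

lemma ftr_sum: "ftr n (\<Sum>i\<in>A. f i) = (\<Sum>i\<in>A. ftr n (f i :: 'f))"
  by (induction A rule: infinite_finite_induct) (simp_all add: ftr_add)

lemma ftr_power_two_pow: "ftr n ((y::'f) ^ (2 ^ r)) = ftr n y"
proof -
  have "ftr n (y ^ 2) = ftr n y" for y :: 'f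
    using sum_lessThan_Suc_periodic[of "\<lambda>j. y ^ (2 ^ j)" n]
    by (simp only: ftr_def power_two_pow_Suc'[symmetric]) simp
  then show ?thesis
    by (induction r) (simp_all only: power_two_pow_Suc power_0 power_one_right)
qed

lemma char2_square_sum: "(\<Sum>i\<in>A. f i) ^ 2 = (\<Sum>i\<in>A. (f i :: 'f) ^ 2)"
  using char2_sum_power_two_pow[OF char2, of f A 1] by simp

lemma ftr_idem: "(ftr n (y::'f)) ^ 2 = ftr n y"
proof -
  have "(ftr n y) ^ 2 = (\<Sum>j<n. (y ^ (2 ^ j)) ^ 2)"
    by (simp add: ftr_def char2_square_sum)
  also have "\<dots> = ftr n (y ^ 2)"
    by (simp only: ftr_def power_two_pow_Suc[symmetric] power_two_pow_Suc')
  finally show ?thesis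
    using ftr_power_two_pow[of y 1] by simp
qed

lemma ftr2_idem: "(ftr2 n (y::'f)) ^ 2 = ftr2 n y"
proof -
  have "(ftr2 n y) ^ 2 = (\<Sum>j<n. \<Sum>i<j. (y ^ (2 ^ i)) ^ 2 * (y ^ (2 ^ j)) ^ 2)"
    by (simp add: ftr2_def char2_square_sum power_mult_distrib)
  also have "\<dots> = (\<Sum>j<n. \<Sum>i<j. y ^ (2 ^ Suc i) * y ^ (2 ^ Suc j))"
    by (simp only: power_two_pow_Suc)
  also have "\<dots> = ftr2 n y"
    unfolding ftr2_def by (rule pair_sum_Suc_periodic) simp
  finally show ?thesis .
qed

lemma ftr2_add:
  "ftr2 n (x + y) = ftr2 n x + ftr2 n y + ftr n x * ftr n y + ftr n (x * (y::'f))"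
proof -
  have "ftr2 n (x + y) = (\<Sum>j<n. \<Sum>i<j. (x ^ (2 ^ i) * x ^ (2 ^ j) + y ^ (2 ^ i) * y ^ (2 ^ j))
      + (x ^ (2 ^ i) * y ^ (2 ^ j) + y ^ (2 ^ i) * x ^ (2 ^ j)))"
    unfolding ftr2_def char2_add_power_two_pow[OF char2] by (simp add: algebra_simps)
  also have "\<dots> = ftr2 n x + ftr2 n y
      + (\<Sum>j<n. \<Sum>i<j. x ^ (2 ^ i) * y ^ (2 ^ j) + y ^ (2 ^ i) * x ^ (2 ^ j))"
    by (simp only: ftr2_def sum.distrib)
  also have "(\<Sum>j<n. \<Sum>i<j. x ^ (2 ^ i) * y ^ (2 ^ j) + y ^ (2 ^ i) * x ^ (2 ^ j))
      = ftr n x * ftr n y - ftr n (x * y)"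
    using pair_sum_cross[of "\<lambda>j. x ^ (2 ^ j)" "\<lambda>j. y ^ (2 ^ j)" n]
    by (simp add: ftr_def power_mult_distrib)
  finally show ?thesis
    by (simp only: char2_diff[OF char2] add.assoc)
qed

lemma minus_one_pow_add:
  assumes "(a::'f) ^ 2 = a" "b ^ 2 = b"
  shows "minus_one_pow (a + b) = minus_one_pow a * minus_one_pow b"
proof -
  have "(1::'f) + 1 = 0"
    by (rule char2_add_self[OF char2])
  then show ?thesis
    using idempotent_field_cases[OF assms(1)] idempotent_field_cases[OF assms(2)]
    by (elim disjE) (simp_all add: minus_one_pow_def)
qed

lemma minus_one_pow_ftr_add:
  "minus_one_pow (ftr n (x + y)) = minus_one_pow (ftr n x) * minus_one_pow (ftr n (y::'f))"
  by (simp add: ftr_add minus_one_pow_add ftr_idem)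

lemma i_pow_trace_add:
  "i_pow_trace n (u + v) = i_pow_trace n u * i_pow_trace n v * minus_one_pow (ftr n (u * (v::'f)))"
proof -
  define p where "p = ftr n u * ftr n v"
  have idem_add: "(x + y) ^ 2 = x + y" if "x ^ 2 = x" "y ^ 2 = y" for x y :: 'f
    using char2_add_power_two_pow[OF char2, of x y 1] that by simp
  have idem: "(ftr2 n u) ^ 2 = ftr2 n u" "(ftr2 n v) ^ 2 = ftr2 n v" "p ^ 2 = p"
    by (simp_all add: p_def ftr2_idem ftr_idem power_mult_distrib)
  have "minus_one_pow (ftr2 n (u + v))
      = minus_one_pow (ftr2 n u) * minus_one_pow (ftr2 n v) * minus_one_pow p * minus_one_pow (ftr n (u * v))"
    unfolding ftr2_add p_def[symmetric] using idem ftr_idem by (simp add: idem_add minus_one_pow_add)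
  moreover have "(if ftr n (u + v) = 0 then 1 else \<i>)
      = (if ftr n u = 0 then 1 else \<i>) * (if ftr n v = 0 then 1 else \<i>) * minus_one_pow p"
  proof -
    have "ftr n u = 0 \<or> ftr n u = 1" "ftr n v = 0 \<or> ftr n v = 1"
      using idempotent_field_cases ftr_idem by blast+
    moreover have "(1::'f) + 1 = 0"
      by (rule char2_add_self[OF char2])
    ultimately show ?thesis
      unfolding ftr_add p_def by (elim disjE) (simp_all add: minus_one_pow_def)
  qed
  ultimately show ?thesis
    unfolding i_pow_trace_def by (simp add: mult_ac)
qed

lemma exists_ftr_nonzero: "\<exists>y::'f. ftr n y \<noteq> 0"
proof -
  obtain z :: 'f where "(\<Sum>j\<le>n - 1. 1 * z ^ (2 ^ (1 * j))) \<noteq> 0"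
    using exists_not_root_two_power_sum[of "\<lambda>j. 1::'f" "n - 1" 1] card_field n_pos by fastforce
  moreover have "{..n - 1} = {..<n}"
    using n_pos by auto
  ultimately show ?thesis
    unfolding ftr_def by auto
qed

lemma sum_minus_one_pow_ftr:
  "(\<Sum>x\<in>UNIV. minus_one_pow (ftr n (x * w))) = (if w = (0::'f) then 2 ^ n else 0)"
proof (cases "w = 0")
  case False
  obtain y :: 'f where "ftr n y \<noteq> 0"
    using exists_ftr_nonzero by blast
  then have "ftr n (y / w * w) = 1"
    using False idempotent_field_cases[OF ftr_idem] by auto
  define S where "S = (\<Sum>x\<in>UNIV. minus_one_pow (ftr n (x * w)))"
  have "S = (\<Sum>x\<in>UNIV. minus_one_pow (ftr n ((x + y / w) * w)))"
    unfolding S_def by (rule sum_UNIV_add_shift[symmetric])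
  also have "\<dots> = - S"
    unfolding S_def sum_negf[symmetric] distrib_right minus_one_pow_ftr_add
      \<open>ftr n (y / w * w) = 1\<close>
    by (simp add: minus_one_pow_def)
  finally have "S = 0"
    by simp
  then show ?thesis
    using False by (simp add: S_def)
qed (simp add: card_field minus_one_pow_def)

end

section \<open>Quadratic characters and bentness\<close>

(* F plays the role of i^Q for a quaternary function Q on the field whose derivative
   Q(x + z) - Q(x) - Q(z) is 2 tr(x D(z)) for an additive map D. *)
locale gf2n_quadratic = gf2n n field_type for n and field_type :: "'f::{field,finite} itself" +
  fixes F :: "'f \<Rightarrow> complex" and D :: "'f \<Rightarrow> 'f"
  assumes F_add: "F (x + z) = F x * F z * minus_one_pow (ftr n (x * D z))"
    and F_unimodular: "cnj (F x) * F x = 1"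
    and D_add: "D (x + z) = D x + D z"
begin

lemma D_zero: "D 0 = 0"
  using D_add[of 0 0] by (metis add_cancel_right_right add_0)

lemma F_zero: "F 0 = 1"
proof -
  have "F 0 = F 0 * F 0"
    using F_add[of 0 0] by (simp add: minus_one_pow_def)
  moreover have "F 0 \<noteq> 0"
    using F_unimodular[of 0] by auto
  ultimately show ?thesis
    by simp
qed

lemma walsh_square:
  "cnj (\<Sum>x\<in>UNIV. F x * minus_one_pow (ftr n (a * x))) * (\<Sum>x\<in>UNIV. F x * minus_one_pow (ftr n (a * x)))
     = 2 ^ n * (\<Sum>z\<in>{z. D z = 0}. F z * minus_one_pow (ftr n (a * z)))"
proof -
  define G where "G x = F x * minus_one_pow (ftr n (a * x))" for x
  have "cnj (\<Sum>x\<in>UNIV. G x) * (\<Sum>y\<in>UNIV. G y) = (\<Sum>x\<in>UNIV. \<Sum>z\<in>UNIV. cnj (G x) * G (z + x))"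
    unfolding sum_product cnj_sum by (intro sum.cong refl sum_UNIV_add_shift[symmetric])
  also have "\<dots> = (\<Sum>x\<in>UNIV. \<Sum>z\<in>UNIV. G z * minus_one_pow (ftr n (x * D z)))"
  proof (intro sum.cong refl)
    fix x z
    have "F (z + x) = F x * F z * minus_one_pow (ftr n (x * D z))"
      using F_add[of x z] by (simp add: add.commute)
    then have "cnj (G x) * G (z + x) = (cnj (F x) * F x) * G z * minus_one_pow (ftr n (x * D z))
        * (minus_one_pow (ftr n (a * x)) * minus_one_pow (ftr n (a * x)))"
      unfolding G_def distrib_left minus_one_pow_ftr_add
      by (simp add: minus_one_pow_def mult_ac)
    then show "cnj (G x) * G (z + x) = G z * minus_one_pow (ftr n (x * D z))"
      by (simp add: F_unimodular)
  qed
  also have "\<dots> = (\<Sum>z\<in>UNIV. G z * (\<Sum>x\<in>UNIV. minus_one_pow (ftr n (x * D z))))"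
    by (subst sum.swap) (simp add: sum_distrib_left)
  also have "\<dots> = (\<Sum>z\<in>UNIV. if D z = 0 then 2 ^ n * G z else 0)"
    by (intro sum.cong refl) (simp add: sum_minus_one_pow_ftr)
  also have "\<dots> = (\<Sum>z\<in>{z. D z = 0}. 2 ^ n * G z)"
    by (simp add: sum.inter_filter[symmetric])
  finally show ?thesis
    by (simp add: G_def sum_distrib_left)
qed

lemma sum_F_kernel:
  "(\<Sum>z\<in>{z. D z = 0}. F z) = (if \<forall>z. D z = 0 \<longrightarrow> F z = 1 then of_nat (card {z. D z = 0}) else 0)"
proof (cases "\<forall>z. D z = 0 \<longrightarrow> F z = 1")
  case False
  then obtain z1 where z1: "D z1 = 0" "F z1 \<noteq> 1"
    by blast
  have "F z1 * F z1 = 1"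
    using F_add[of z1 z1] char2_add_self[OF char2, of z1] by (simp add: z1 F_zero minus_one_pow_def)
  then have "F z1 = -1"
    using z1(2) by (metis add.inverse_inverse mult_cancel_left1 mult_minus_left square_eq_1_iff)
  have "z + z1 + z1 = z" for z
    using char2_add_self[OF char2, of z1] by (simp add: add.assoc)
  then have "(\<Sum>z\<in>{z. D z = 0}. F z) = (\<Sum>z\<in>{z. D z = 0}. F (z + z1))"
    by (intro sum.reindex_bij_witness[where i="\<lambda>z. z + z1" and j="\<lambda>z. z + z1"])
       (auto simp: D_add z1 add.assoc)
  also have "\<dots> = - (\<Sum>z\<in>{z. D z = 0}. F z)"
    by (simp add: F_add z1 \<open>F z1 = -1\<close> minus_one_pow_def sum_negf)
  finally have "(\<Sum>z\<in>{z. D z = 0}. F z) = 0"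
    by simp
  then show ?thesis
    unfolding if_not_P[OF False] .
qed simp

lemma bent_iff_kernel_trivial:
  "(\<forall>a. cmod (\<Sum>x\<in>UNIV. F x * minus_one_pow (ftr n (a * x))) = 2 powr (real n / 2))
     \<longleftrightarrow> (\<forall>z. D z = 0 \<longrightarrow> z = 0)"
proof
  assume bent: "\<forall>a. cmod (\<Sum>x\<in>UNIV. F x * minus_one_pow (ftr n (a * x))) = 2 powr (real n / 2)"
  have "(\<Sum>z\<in>{z. D z = 0}. F z) = 1"
    using bent[rule_format, of 0] walsh_square[of 0]
    by (simp add: cmod_eq_two_powr_half_iff minus_one_pow_def)
  then have "card {z. D z = 0} = 1"
    unfolding sum_F_kernel by (simp split: if_splits)
  then obtain z0 where "{z. D z = 0} = {z0}"
    by (auto simp: card_1_singleton_iff)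
  then show "\<forall>z. D z = 0 \<longrightarrow> z = 0"
    using D_zero by (metis mem_Collect_eq singletonD)
next
  assume "\<forall>z. D z = 0 \<longrightarrow> z = 0"
  then have "{z. D z = 0} = {0}"
    using D_zero by auto
  then show "\<forall>a. cmod (\<Sum>x\<in>UNIV. F x * minus_one_pow (ftr n (a * x))) = 2 powr (real n / 2)"
    unfolding cmod_eq_two_powr_half_iff walsh_square by (simp add: F_zero minus_one_pow_def)
qed

end

section \<open>Linearised polynomials and the quadratic form\<close>

(* The 2^e-linearised associate of p, evaluated at z: sum over j of p_j z^(2^(e j)).
   Products of polynomials correspond to compositions of their linearised associates. *)
definition lin_eval :: "nat \<Rightarrow> bit poly \<Rightarrow> 'f::field \<Rightarrow> 'f" where
  "lin_eval e p z = (\<Sum>j\<le>degree p. if coeff p j = 0 then 0 else z ^ (2 ^ (e * j)))"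

lemma lin_eval_degree_bound:
  assumes "degree p \<le> N"
  shows "lin_eval e p z = (\<Sum>j\<le>N. if coeff p j = 0 then 0 else z ^ (2 ^ (e * j)))"
  unfolding lin_eval_def
  by (rule sum.mono_neutral_left) (use assms in \<open>auto intro: le_degree\<close>)

lemma lin_eval_0 [simp]: "lin_eval e 0 z = 0"
  by (simp add: lin_eval_def)

lemma lin_eval_1 [simp]: "lin_eval e 1 z = z"
  by (simp add: lin_eval_def)

lemma lin_eval_at_0 [simp]: "lin_eval e p (0::'f::field) = 0"
proof -
  have "(0::'f) ^ (2 ^ j) = 0" for j
    by (simp add: zero_power)
  then show ?thesis
    unfolding lin_eval_def by (simp only: if_cancel sum.neutral_const)
qed

lemma lin_eval_monom_1: "lin_eval e (monom 1 j) (z::'f::field) = z ^ (2 ^ (e * j))"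
proof -
  have "(if (if j = i then (1::bit) else 0) = 0 then 0 else w) = (if i = j then w else 0)" for i and w :: 'f
    by auto
  then show ?thesis
    by (simp add: lin_eval_def degree_monom_eq coeff_monom)
qed

lemma lin_eval_pCons:
  "lin_eval e (pCons a p) z = (if a = 0 then 0 else z) + lin_eval e p (z ^ (2 ^ e))"
proof -
  have "lin_eval e (pCons a p) z
      = (\<Sum>j\<le>Suc (degree p). if coeff (pCons a p) j = 0 then 0 else z ^ (2 ^ (e * j)))"
    by (rule lin_eval_degree_bound) (simp add: degree_pCons_le)
  also have "\<dots> = (if a = 0 then 0 else z)
      + (\<Sum>j\<le>degree p. if coeff p j = 0 then 0 else z ^ (2 ^ (e * Suc j)))"
    by (subst sum.atMost_Suc_shift) simp
  also have "(\<Sum>j\<le>degree p. if coeff p j = 0 then 0 else z ^ (2 ^ (e * Suc j)))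
      = lin_eval e p (z ^ (2 ^ e))"
    unfolding lin_eval_def
    by (intro sum.cong refl) (simp add: power_mult[symmetric] power_add[symmetric] mult.commute)
  finally show ?thesis .
qed

lemma degree_x_pow_minus_1:
  assumes "m \<ge> 1"
  shows "degree ([:-1:] + monom (1::bit) m) = m"
  using assms by (simp add: degree_add_eq_right degree_monom_eq)

lemma pcompose_monom_1: "pcompose (monom (1::'a::comm_ring_1) i) q = q ^ i"
proof (induction i)
  case 0
  then show ?case
    by (simp add: monom_0 pcompose_1 one_pCons[symmetric])
next
  case (Suc i)
  have "monom (1::'a) (Suc i) = [:0, 1:] * monom 1 i"
    by (simp add: monom_Suc)
  then show ?case
    using Suc by (simp add: pcompose_mult pcompose_pCons)
qed

definition quad_part :: "nat \<Rightarrow> nat \<Rightarrow> nat \<Rightarrow> (nat \<Rightarrow> bool) \<Rightarrow> 'f::field \<Rightarrow> 'f \<Rightarrow> 'f" where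
  "quad_part e m k c b y = (\<Sum>i\<in>{1..(m - 1) div 2}. (if c i then 1 else 0) * b * y ^ (1 + 2 ^ (e * k * i)))"

(* i^Q(t) for the Teichmueller lift t of y, when a is the residue of alpha (so a^2 is that of beta). *)
definition i_pow_Q :: "nat \<Rightarrow> nat \<Rightarrow> nat \<Rightarrow> nat \<Rightarrow> (nat \<Rightarrow> bool) \<Rightarrow> 'f::field \<Rightarrow> 'f \<Rightarrow> complex" where
  "i_pow_Q n e m k c a y = i_pow_trace n (a * y) * minus_one_pow (ftr n (quad_part e m k c (a ^ 2) y))"

context gf2n
begin

lemma lin_eval_add: "lin_eval e (p + q) (z::'f) = lin_eval e p z + lin_eval e q z"
proof -
  define N where "N = max (degree p) (degree q)"
  have N: "degree p \<le> N" "degree q \<le> N" "degree (p + q) \<le> N"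
    unfolding N_def by (auto intro: degree_add_le)
  have "(if coeff p j + coeff q j = 0 then 0 else w)
      = (if coeff p j = 0 then 0 else w) + (if coeff q j = 0 then 0 else w)" for j and w :: 'f
    using char2_add_self[OF char2, of w] by (cases "coeff p j"; cases "coeff q j") simp_all
  then show ?thesis
    unfolding lin_eval_degree_bound[OF N(1)] lin_eval_degree_bound[OF N(2)]
      lin_eval_degree_bound[OF N(3)]
    by (simp add: sum.distrib)
qed

lemma lin_eval_sum: "lin_eval e (\<Sum>i\<in>A. p i) (z::'f) = (\<Sum>i\<in>A. lin_eval e (p i) z)"
  by (induction A rule: infinite_finite_induct) (simp_all add: lin_eval_add)

lemma lin_eval_additive: "lin_eval e p (x + y) = lin_eval e p x + lin_eval e p (y::'f)"
proof -
  have "(if P then 0 else a + b) = (if P then 0 else a) + (if P then 0 else b)" for P and a b :: 'f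
    by simp
  then show ?thesis
    unfolding lin_eval_def char2_add_power_two_pow[OF char2] by (simp add: sum.distrib)
qed

lemma lin_eval_power_two_pow: "lin_eval e p ((z::'f) ^ (2 ^ e)) = (lin_eval e p z) ^ (2 ^ e)"
  unfolding lin_eval_def char2_sum_power_two_pow[OF char2]
  by (intro sum.cong refl)
     (simp add: power_mult[symmetric] power_add[symmetric] mult.commute zero_power)

lemma lin_eval_mult: "lin_eval e (p * q) (z::'f) = lin_eval e p (lin_eval e q z)"
proof (induction p arbitrary: z rule: pCons_induct)
  case (pCons a p)
  have smult: "lin_eval e (smult a q) z = (if a = 0 then 0 else lin_eval e q z)"
    by (cases a) simp_all
  have "lin_eval e (pCons a p * q) z = (if a = 0 then 0 else lin_eval e q z) + lin_eval e (p * q) (z ^ (2 ^ e))"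
    by (simp add: lin_eval_add smult lin_eval_pCons)
  then show ?case
    by (simp add: pCons.IH lin_eval_power_two_pow lin_eval_pCons)
qed simp

lemma lin_eval_nonzero:
  assumes "r \<noteq> 0" "e \<ge> 1" "e * degree r < n"
  shows "\<exists>y::'f. lin_eval e r y \<noteq> 0"
proof -
  define A where "A j = (if coeff r j = 0 then 0 else (1::'f))" for j
  have "A (degree r) \<noteq> 0"
    using assms(1) by (simp add: A_def)
  moreover have "2 ^ (e * degree r) < card (UNIV::'f set)"
    using assms(3) by (simp add: card_field)
  ultimately obtain y :: 'f where "(\<Sum>j\<le>degree r. A j * y ^ (2 ^ (e * j))) \<noteq> 0"
    using exists_not_root_two_power_sum[of A "degree r" e] assms(2) by blast
  moreover have "A j * x = (if coeff r j = 0 then 0 else x)" for j x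
    by (simp add: A_def)
  ultimately show ?thesis
    unfolding lin_eval_def by auto
qed

lemma lin_eval_x_pow_minus_1:
  assumes "n = e * m"
  shows "lin_eval e ([:-1:] + monom 1 m) (z::'f) = 0"
proof -
  have "[:-1::bit:] + monom 1 m = 1 + monom 1 m"
    by (simp add: one_pCons)
  then show ?thesis
    using power_two_pow_n[of z] char2_add_self[OF char2, of z]
    by (simp only: assms lin_eval_add lin_eval_1 lin_eval_monom_1)
qed

lemma lin_eval_annihilator_generator:
  assumes "lin_eval e M (w::'f) = 0" "M \<noteq> 0"
  obtains g where "g \<noteq> 0" "lin_eval e g w = 0" "\<And>f. lin_eval e f w = 0 \<Longrightarrow> g dvd f"
proof -
  define I where "I = {f. lin_eval e f w = 0 \<and> f \<noteq> 0}"
  obtain g where g: "g \<in> I" and g_min: "\<And>f. f \<in> I \<Longrightarrow> degree g \<le> degree f"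
    using ex_has_least_nat[of "\<lambda>f. f \<in> I" M degree] assms by (auto simp: I_def)
  have dvd: "g dvd f" if "lin_eval e f w = 0" for f
  proof (rule ccontr)
    assume "\<not> g dvd f"
    then have "f mod g \<noteq> 0"
      by (simp add: dvd_eq_mod_eq_0)
    moreover have "lin_eval e (f mod g) w = 0"
      using that g div_mult_mod_eq[of f g] lin_eval_add[of e "f div g * g" "f mod g" w]
      by (simp add: I_def lin_eval_mult)
    ultimately have "f mod g \<in> I"
      by (simp add: I_def)
    then show False
      using g_min g degree_mod_less'[of g f] \<open>f mod g \<noteq> 0\<close> by (fastforce simp: I_def)
  qed
  show thesis
    using g dvd by (intro that) (auto simp: I_def)
qed

lemma x_pow_minus_1_nonzero: "n = e * m \<Longrightarrow> [:-1:] + monom (1::bit) m \<noteq> 0"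
  using n_pos degree_x_pow_minus_1[of m] by (cases m) auto

lemma lin_eval_root_of_not_coprime:
  assumes "n = e * m" "e \<ge> 1" "\<not> coprime P ([:-1:] + monom 1 m)"
  shows "\<exists>w::'f. w \<noteq> 0 \<and> lin_eval e P w = 0"
proof -
  define M where "M = [:-1::bit:] + monom 1 m"
  obtain c where "c dvd P" "c dvd M" "\<not> is_unit c"
    using assms(3) unfolding coprime_def M_def by blast
  obtain r where r: "M = c * r"
    using \<open>c dvd M\<close> by (elim dvdE)
  obtain s where s: "P = c * s"
    using \<open>c dvd P\<close> by (elim dvdE)
  have "c \<noteq> 0" "r \<noteq> 0"
    using r x_pow_minus_1_nonzero[OF assms(1)] by (auto simp: M_def)
  moreover have "degree M = m"
    using n_pos assms(1) degree_x_pow_minus_1[of m] by (cases m) (simp_all add: M_def)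
  moreover have "degree c \<noteq> 0"
    using \<open>\<not> is_unit c\<close> is_unit_iff_degree \<open>c \<noteq> 0\<close> by blast
  ultimately have "e * degree r < n"
    using degree_mult_eq[of c r] r assms(1,2) by simp
  then obtain y :: 'f where y: "lin_eval e r y \<noteq> 0"
    using lin_eval_nonzero[OF \<open>r \<noteq> 0\<close> assms(2)] by blast
  have "lin_eval e M y = 0"
    unfolding M_def by (rule lin_eval_x_pow_minus_1[OF assms(1)])
  then have "lin_eval e c (lin_eval e r y) = 0"
    by (simp add: r lin_eval_mult)
  then have "lin_eval e P (lin_eval e r y) = 0"
    by (simp add: s mult.commute[of c] lin_eval_mult)
  then show ?thesis
    using y by blast
qed

lemma lin_eval_root_of_coprime:
  assumes "n = e * m" "coprime P ([:-1:] + monom 1 m)" "lin_eval e P (w::'f) = 0"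
  shows "w = 0"
proof -
  note M_vanishes = lin_eval_x_pow_minus_1[OF assms(1)]
  obtain g where g: "g \<noteq> 0" "lin_eval e g w = 0" "\<And>f. lin_eval e f w = 0 \<Longrightarrow> g dvd f"
    using lin_eval_annihilator_generator[OF M_vanishes x_pow_minus_1_nonzero[OF assms(1)]] by blast
  then have "is_unit g"
    using assms(2,3) M_vanishes unfolding coprime_def by blast
  then have "degree g = 0"
    using is_unit_iff_degree[OF g(1)] by simp
  then obtain a where "g = [:a:]"
    by (elim degree_eq_zeroE)
  moreover have "a = 1"
    using g(1) \<open>g = [:a:]\<close> by (cases a) simp_all
  ultimately have "g = 1"
    by (simp add: one_pCons)
  then show "w = 0"
    using g(2) by simp
qed

lemma lin_eval_kernel_trivial_iff_coprime:
  assumes "n = e * m" "e \<ge> 1"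
  shows "(\<forall>z::'f. lin_eval e P z = 0 \<longrightarrow> z = 0) \<longleftrightarrow> coprime P ([:-1:] + monom 1 m)"
  using lin_eval_root_of_not_coprime[OF assms] lin_eval_root_of_coprime[OF assms(1)] by blast

lemma lin_eval_cpoly_compose:
  "lin_eval e (pcompose (cpoly m c) (monom 1 k)) (z::'f) = z +
     (\<Sum>i\<in>{1..(m - 1) div 2}. if c i then z ^ (2 ^ (e * k * i)) + z ^ (2 ^ (e * k * (m - i))) else 0)"
proof -
  have "pcompose (cpoly m c) (monom 1 k) =
     1 + (\<Sum>i\<in>{1..(m - 1) div 2}. if c i then monom 1 (k * i) + monom 1 (k * (m - i)) else 0)"
    unfolding cpoly_def pcompose_add pcompose_1 pcompose_sum
    by (intro arg_cong2[where f="(+)"] refl sum.cong)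
       (auto simp: pcompose_add pcompose_monom_1 monom_power mult.commute)
  moreover have "lin_eval e (if b then p else q) z = (if b then lin_eval e p z else lin_eval e q z)"
    for b p q
    by simp
  ultimately show ?thesis
    by (simp add: lin_eval_add lin_eval_sum lin_eval_monom_1 mult.assoc cong: if_cong)
qed

(* Raising to the power 2^(e k (m - i)) fixes both b and the trace and turns x^(2^(e k i)) into x. *)
lemma ftr_conjugate_swap:
  assumes "b ^ (2 ^ e) = (b::'f)" "n = e * m" "i \<le> m"
  shows "ftr n (b * z * x ^ (2 ^ (e * k * i))) = ftr n (b * x * z ^ (2 ^ (e * k * (m - i))))"
proof -
  define t r where "t = e * k * i" and "r = e * k * (m - i)"
  have "t + r = e * k * (i + (m - i))"
    unfolding t_def r_def by (simp only: add_mult_distrib2)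
  then have "t + r = k * n"
    using assms(2,3) by simp
  then have "x ^ (2 ^ (t + r)) = x"
    using power_two_pow_mod[OF power_two_pow_n[of x], of "k * n"] by simp
  moreover have "b ^ (2 ^ r) = b"
    using power_two_pow_mult_fixed[OF assms(1), of "k * (m - i)"] by (simp add: r_def mult.assoc)
  moreover have "(b * z * x ^ (2 ^ t)) ^ (2 ^ r) = b ^ (2 ^ r) * z ^ (2 ^ r) * x ^ (2 ^ (t + r))"
    by (simp add: power_mult_distrib power_mult[symmetric] power_add)
  ultimately have "(b * z * x ^ (2 ^ t)) ^ (2 ^ r) = b * x * z ^ (2 ^ r)"
    by (simp add: mult_ac)
  then show ?thesis
    using ftr_power_two_pow[of "b * z * x ^ (2 ^ t)" r] by (simp add: t_def r_def)
qed

lemma ftr_quad_part_add: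
  assumes "b ^ (2 ^ e) = (b::'f)" "n = e * m"
  shows "ftr n (quad_part e m k c b (x + z)) = ftr n (quad_part e m k c b x + quad_part e m k c b z
    + x * (b * (lin_eval e (pcompose (cpoly m c) (monom 1 k)) z - z)))"
proof -
  define I where "I = {1..(m - 1) div 2}"
  define \<chi> where "\<chi> i = (if c i then 1 else 0 :: 'f)" for i
  define cross where "cross = (\<Sum>i\<in>I. \<chi> i * b * (x * z ^ (2 ^ (e * k * i)) + z * x ^ (2 ^ (e * k * i))))"
  have "(x + z) ^ (1 + 2 ^ t) = x ^ (1 + 2 ^ t) + z ^ (1 + 2 ^ t) + (x * z ^ (2 ^ t) + z * x ^ (2 ^ t))" for t
    by (simp add: char2_add_power_two_pow[OF char2] algebra_simps)
  then have "quad_part e m k c b (x + z) = quad_part e m k c b x + quad_part e m k c b z + cross"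
    by (simp add: quad_part_def cross_def I_def \<chi>_def distrib_left sum.distrib)
  moreover have "ftr n cross = ftr n (\<Sum>i\<in>I. \<chi> i * b * (x * z ^ (2 ^ (e * k * i)) + x * z ^ (2 ^ (e * k * (m - i)))))"
    unfolding cross_def ftr_sum
  proof (intro sum.cong refl)
    fix i assume "i \<in> I"
    then have "i \<le> m"
      using div_le_dividend[of "m - 1" 2] by (auto simp: I_def)
    show "ftr n (\<chi> i * b * (x * z ^ (2 ^ (e * k * i)) + z * x ^ (2 ^ (e * k * i))))
        = ftr n (\<chi> i * b * (x * z ^ (2 ^ (e * k * i)) + x * z ^ (2 ^ (e * k * (m - i)))))"
      using ftr_conjugate_swap[OF assms \<open>i \<le> m\<close>, of z x k]
      by (simp add: \<chi>_def distrib_left ftr_add mult_ac)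
  qed
  moreover have "(\<Sum>i\<in>I. \<chi> i * b * (x * z ^ (2 ^ (e * k * i)) + x * z ^ (2 ^ (e * k * (m - i)))))
      = x * (b * (lin_eval e (pcompose (cpoly m c) (monom 1 k)) z - z))"
    unfolding lin_eval_cpoly_compose add_diff_cancel_left' sum_distrib_left I_def
    by (intro sum.cong refl) (simp add: \<chi>_def algebra_simps)
  ultimately show ?thesis
    by (simp add: ftr_add)
qed

lemma i_pow_Q_add:
  assumes "a ^ (2 ^ e) = (a::'f)" "n = e * m"
  shows "i_pow_Q n e m k c a (x + z)
    = i_pow_Q n e m k c a x * i_pow_Q n e m k c a z
      * minus_one_pow (ftr n (x * (a ^ 2 * lin_eval e (pcompose (cpoly m c) (monom 1 k)) z)))"
proof -
  define L where "L = lin_eval e (pcompose (cpoly m c) (monom 1 k)) z"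
  have "(a ^ 2) ^ (2 ^ e) = a ^ 2"
    using assms(1) by (metis power_mult_distrib power2_eq_square)
  note quad = ftr_quad_part_add[OF this assms(2), of k c x z]
  have "x * (a ^ 2 * L) = a * x * (a * z) + x * (a ^ 2 * (L - z))"
    by (simp add: power2_eq_square algebra_simps)
  then have "minus_one_pow (ftr n (x * (a ^ 2 * L)))
      = minus_one_pow (ftr n (a * x * (a * z))) * minus_one_pow (ftr n (x * (a ^ 2 * (L - z))))"
    by (simp only: minus_one_pow_ftr_add)
  then show ?thesis
    unfolding i_pow_Q_def distrib_left i_pow_trace_add quad L_def[symmetric] minus_one_pow_ftr_add
    by (simp add: mult_ac)
qed

lemma i_pow_Q_bent_iff_coprime:
  assumes "a \<noteq> 0" "a ^ (2 ^ e) = (a::'f)" "n = e * m" "e \<ge> 1"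
  shows "(\<forall>w. cmod (\<Sum>x\<in>UNIV. i_pow_Q n e m k c a x * minus_one_pow (ftr n (w * x))) = 2 powr (real n / 2))
    \<longleftrightarrow> coprime (pcompose (cpoly m c) (monom 1 k)) ([:-1:] + monom 1 m)"
proof -
  interpret gf2n_quadratic n "TYPE('f)" "i_pow_Q n e m k c a"
    "\<lambda>z. a ^ 2 * lin_eval e (pcompose (cpoly m c) (monom 1 k)) z"
  proof
    show "cnj (i_pow_Q n e m k c a x) * i_pow_Q n e m k c a x = 1" for x
      by (auto simp: i_pow_Q_def i_pow_trace_def minus_one_pow_def)
  qed (simp_all add: i_pow_Q_add[OF assms(2,3)] lin_eval_additive distrib_left)
  show ?thesis
    unfolding bent_iff_kernel_trivial lin_eval_kernel_trivial_iff_coprime[OF assms(3,4), symmetric]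
    using assms(1) by simp
qed

end

section \<open>Reduction of GR(4,n) to its residue field\<close>

locale gr4_reduction =
  fixes n :: nat and \<mu> :: "'r::{comm_ring_1,finite} \<Rightarrow> 'f::{field,finite}"
  assumes galois_ring: "is_GR4 n TYPE('r)"
    and card_residue_field: "card (UNIV::'f set) = 2 ^ n"
    and mu_1: "\<mu> 1 = 1"
    and mu_add: "\<mu> (x + y) = \<mu> x + \<mu> y"
    and mu_mult: "\<mu> (x * y) = \<mu> x * \<mu> y"
    and mu_surj: "surj \<mu>"
begin

lemma four_eq_0: "(4::'r) = 0"
  and two_neq_0: "(2::'r) \<noteq> 0"
  and unit_of_not_double: "\<nexists>y. (z::'r) = 2 * y \<Longrightarrow> \<exists>w. z * w = 1"
  using galois_ring by (auto simp: is_GR4_def)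

lemma mu_0 [simp]: "\<mu> 0 = 0"
proof -
  have "\<mu> 0 + \<mu> 0 = \<mu> 0 + 0"
    using mu_add[of 0 0] by simp
  then show ?thesis
    by (rule add_left_imp_eq)
qed

lemma mu_diff: "\<mu> (x - y) = \<mu> x - \<mu> y"
  using mu_add[of "x - y" y] by (simp add: algebra_simps)

lemma mu_power: "\<mu> (x ^ j) = \<mu> x ^ j"
  by (induction j) (simp_all add: mu_1 mu_mult)

lemma mu_sum: "\<mu> (\<Sum>i\<in>A. f i) = (\<Sum>i\<in>A. \<mu> (f i))"
  by (induction A rule: infinite_finite_induct) (simp_all add: mu_add)

lemma mu_of_int: "\<mu> (of_int j) = of_int j"
  by (induction j rule: int_induct[where k=0]) (simp_all add: mu_add mu_1 mu_diff)

lemma residue_char2: "(2::'f) = 0"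
proof -
  have "(2::'f) * 2 = 0"
    using mu_of_int[of 4] four_eq_0 by simp
  then show ?thesis
    by (simp only: mult_eq_0_iff disj_absorb)
qed

sublocale gf2n n "TYPE('f)"
  by unfold_locales (fact card_residue_field, fact residue_char2)

lemma mu_eq_0_iff: "\<mu> z = 0 \<longleftrightarrow> (\<exists>y. z = 2 * y)"
proof
  assume "\<mu> z = 0"
  show "\<exists>y. z = 2 * y"
  proof (rule ccontr)
    assume "\<nexists>y. z = 2 * y"
    then obtain w where "z * w = 1"
      using unit_of_not_double by blast
    then show False
      using \<open>\<mu> z = 0\<close> mu_mult[of z w] mu_1 by simp
  qed
qed (auto simp: mu_mult residue_char2 mu_of_int[of 2, simplified])

lemma double_eq_iff: "2 * a = 2 * (b::'r) \<longleftrightarrow> \<mu> a = \<mu> b"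
proof
  assume "2 * a = 2 * b"
  then have "2 * (a - b) = 0"
    by (simp add: algebra_simps)
  show "\<mu> a = \<mu> b"
  proof (rule ccontr)
    assume "\<mu> a \<noteq> \<mu> b"
    then obtain w where "(a - b) * w = 1"
      using unit_of_not_double mu_eq_0_iff by (metis mu_diff right_minus_eq)
    then have "2 = 2 * (a - b) * w"
      by (metis mult.assoc mult.right_neutral)
    then show False
      using \<open>2 * (a - b) = 0\<close> two_neq_0 by simp
  qed
next
  assume "\<mu> a = \<mu> b"
  then obtain y where "a - b = 2 * y"
    using mu_eq_0_iff[of "a - b"] by (auto simp: mu_diff)
  then have "2 * a - 2 * b = 4 * y"
    by (simp add: algebra_simps)
  then show "2 * a = 2 * b"
    using four_eq_0 by simp
qed

lemma square_eq_of_mu_eq: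
  assumes "\<mu> a = \<mu> b"
  shows "a ^ 2 = (b::'r) ^ 2"
proof -
  obtain y where "a = b + 2 * y"
    using assms mu_eq_0_iff[of "a - b"] by (auto simp: mu_diff algebra_simps)
  then have "a ^ 2 = b ^ 2 + 4 * (b * y + y * y)"
    by (simp add: power2_eq_square algebra_simps)
  then show ?thesis
    using four_eq_0 by simp
qed

abbreviation T :: "'r set" where "T \<equiv> teich n"

lemma power_two_pow_via_square: "(x::'r) ^ (2 ^ n) = (x ^ 2) ^ (2 ^ (n - 1))"
  using n_pos power_two_pow_Suc'[of x "n - 1"] by simp

(* Squaring only depends on the residue class, so x^(2^n) is the Teichmueller representative of x. *)
lemma teich_power_two_pow: "(z::'r) ^ (2 ^ n) \<in> T" "\<mu> (z ^ (2 ^ n)) = \<mu> z"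
proof -
  show mu_eq: "\<mu> (z ^ (2 ^ n)) = \<mu> z"
    by (simp add: mu_power)
  have "(z ^ (2 ^ n)) ^ (2 ^ n) = ((z ^ (2 ^ n)) ^ 2) ^ (2 ^ (n - 1))"
    by (rule power_two_pow_via_square)
  also have "\<dots> = z ^ (2 ^ n)"
    using square_eq_of_mu_eq[OF mu_eq] power_two_pow_via_square[of z] by simp
  finally show "z ^ (2 ^ n) \<in> T"
    by (simp add: teich_def)
qed

lemma teich_inj:
  assumes "x \<in> T" "y \<in> T" "\<mu> x = \<mu> y"
  shows "x = y"
  using assms square_eq_of_mu_eq[OF assms(3)] power_two_pow_via_square[of x]
    power_two_pow_via_square[of y]
  by (simp add: teich_def)

lemma teich_mult: "x \<in> T \<Longrightarrow> y \<in> T \<Longrightarrow> x * y \<in> T"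
  by (simp add: teich_def power_mult_distrib)

lemma teich_zero: "0 \<in> T"
  by (simp add: teich_def zero_power)

lemma teich_lift: "inv_into T \<mu> y \<in> T" "\<mu> (inv_into T \<mu> y) = y"
proof -
  have "y \<in> \<mu> ` T"
    using teich_power_two_pow surj_f_inv_f[OF mu_surj, of y] by (metis image_eqI)
  then show "inv_into T \<mu> y \<in> T" "\<mu> (inv_into T \<mu> y) = y"
    by (simp_all add: inv_into_into f_inv_into_f)
qed

lemma teich_decomposition_unique:
  assumes "x \<in> T" "y \<in> T" "x' \<in> T" "y' \<in> T" "x + 2 * y = x' + 2 * (y'::'r)"
  shows "x = x'" "y = y'"
proof -
  have "\<mu> (2 * y) = 0" "\<mu> (2 * y') = 0"
    using mu_eq_0_iff by auto
  then have "\<mu> x = \<mu> x'"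
    using arg_cong[OF assms(5), of \<mu>] by (simp add: mu_add)
  then show "x = x'"
    using teich_inj assms by blast
  then have "\<mu> y = \<mu> y'"
    using assms(5) double_eq_iff by simp
  then show "y = y'"
    using teich_inj assms by blast
qed

lemma tx_ty:
  assumes "x \<in> T" "y \<in> T"
  shows "tx n (x + 2 * y) = x" "ty n (x + 2 * y) = (y::'r)"
proof -
  show tx: "tx n (x + 2 * y) = x"
    unfolding tx_def
    by (rule the_equality) (use assms teich_decomposition_unique in blast)+
  show "ty n (x + 2 * y) = y"
    unfolding ty_def tx
    by (rule the_equality) (use assms teich_decomposition_unique in blast)+
qed

lemma mu_of_bool_nonzero:
  assumes "(v::'f) ^ 2 = v"
  shows "\<mu> (of_int (of_bool (v \<noteq> 0))) = v"
  using idempotent_field_cases[OF assms] by (auto simp: mu_of_int mu_1)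

(* Squaring permutes the conjugates, so their sum s and pair sum P satisfy s^2 = s + 2 P; as s^2
   only depends on the residue tr(mu a) of s, this determines s modulo 4. *)
lemma sum_teich_conjugates:
  assumes "a \<in> T"
  shows "(\<Sum>j<n. a ^ (2 ^ j))
    = of_int (of_bool (ftr n (\<mu> a) \<noteq> 0) + 2 * of_bool (ftr2 n (\<mu> a) \<noteq> 0))"
proof -
  define s P where "s = (\<Sum>j<n. a ^ (2 ^ j))" and "P = (\<Sum>j<n. \<Sum>i<j. a ^ (2 ^ i) * a ^ (2 ^ j))"
  define t where "t = (of_int (of_bool (ftr n (\<mu> a) \<noteq> 0)) :: 'r)"
  have "(\<Sum>j<n. (a ^ (2 ^ j)) ^ 2) = (\<Sum>j<n. a ^ (2 ^ Suc j))"
    by (simp only: power_two_pow_Suc)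
  also have "\<dots> = s"
    using sum_lessThan_Suc_periodic[of "\<lambda>j. a ^ (2 ^ j)" n] assms
    by (simp add: s_def teich_def)
  finally have "(\<Sum>j<n. (a ^ (2 ^ j)) ^ 2) = s" .
  then have "s ^ 2 = s + 2 * P"
    using square_sum_lessThan[of "\<lambda>j. a ^ (2 ^ j)" n] by (simp add: s_def P_def)
  moreover have "\<mu> s = \<mu> t"
    using mu_of_bool_nonzero[OF ftr_idem] by (simp add: s_def t_def ftr_def mu_sum mu_power)
  then have "s ^ 2 = t"
    using square_eq_of_mu_eq[of s t] by (simp add: t_def)
  ultimately have "s = t - 2 * P"
    by (simp add: algebra_simps)
  also have "\<dots> = t + 2 * P"
    using four_eq_0 by (simp add: algebra_simps eq_neg_iff_add_eq_0[symmetric])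
  also have "2 * P = 2 * of_int (of_bool (ftr2 n (\<mu> a) \<noteq> 0))"
    using mu_of_bool_nonzero[OF ftr2_idem] double_eq_iff
    by (simp add: P_def ftr2_def mu_sum mu_power mu_mult)
  finally show ?thesis
    by (simp add: s_def t_def)
qed

lemma GTr_teich_plus_double:
  assumes "a \<in> T"
  shows "GTr n (a + 2 * S) = of_int (of_bool (ftr n (\<mu> a) \<noteq> 0) + 2 * of_bool (ftr2 n (\<mu> a) \<noteq> 0)
    + 2 * of_bool (ftr n (\<mu> S) \<noteq> 0))"
proof -
  define y where "y = S ^ (2 ^ n)"
  have "y \<in> T" "\<mu> y = \<mu> S"
    unfolding y_def by (rule teich_power_two_pow)+
  then have "a + 2 * S = a + 2 * y"
    using double_eq_iff by simp
  then have "GTr n (a + 2 * S) = (\<Sum>j<n. a ^ (2 ^ j)) + 2 * (\<Sum>j<n. y ^ (2 ^ j))"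
    by (simp add: GTr_def tx_ty[OF assms \<open>y \<in> T\<close>] sum.distrib sum_distrib_left)
  moreover have "2 * (\<Sum>j<n. y ^ (2 ^ j)) = 2 * of_int (of_bool (ftr n (\<mu> S) \<noteq> 0))"
    using mu_of_bool_nonzero[OF ftr_idem] double_eq_iff \<open>\<mu> y = \<mu> S\<close>
    by (simp add: ftr_def mu_sum mu_power)
  ultimately show ?thesis
    by (simp add: sum_teich_conjugates[OF assms])
qed

lemma of_int_eq_0_iff_4_dvd: "(of_int d :: 'r) = 0 \<longleftrightarrow> 4 dvd d"
proof
  assume "(of_int d :: 'r) = 0"
  have "(of_int d :: 'r) = 4 * of_int (d div 4) + of_int (d mod 4)"
    by (metis mult_div_mod_eq of_int_add of_int_mult of_int_numeral)
  then have zero: "(of_int (d mod 4) :: 'r) = 0"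
    using \<open>of_int d = 0\<close> four_eq_0 by simp
  have one: "(1::'r) \<noteq> 0"
    using two_neq_0 by (metis add.right_neutral one_add_one)
  moreover have "(3::'r) = - 1"
    using four_eq_0 by (simp add: eq_neg_iff_add_eq_0)
  ultimately have "(3::'r) \<noteq> 0"
    by (metis neg_equal_0_iff_equal)
  moreover have "d mod 4 = 0 \<or> d mod 4 = 1 \<or> d mod 4 = 2 \<or> d mod 4 = 3"
    by linarith
  ultimately show "4 dvd d"
    using zero one two_neq_0 by (elim disjE) (simp_all add: dvd_eq_mod_eq_0)
next
  assume "4 dvd d"
  then obtain k where "d = 4 * k"
    by (elim dvdE)
  then show "(of_int d :: 'r) = 0"
    using four_eq_0 by simp
qed

lemma of_int_eq_iff_mod_4: "(of_int i :: 'r) = of_int j \<longleftrightarrow> i mod 4 = j mod 4"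
  using of_int_eq_0_iff_4_dvd[of "i - j"] by (simp add: mod_eq_dvd_iff)

lemma z4_val_of_int: "z4_val (of_int j :: 'r) = j mod 4"
  unfolding z4_val_def by (rule the_equality) (auto simp: of_int_eq_iff_mod_4)

lemma i_pow_GTr:
  assumes "a \<in> T"
  shows "\<i> ^ nat (z4_val (GTr n (a + 2 * S)) mod 4) = i_pow_trace n (\<mu> a) * minus_one_pow (ftr n (\<mu> S))"
  unfolding GTr_teich_plus_double[OF assms] z4_val_of_int i_pow_trace_def minus_one_pow_def
  by (simp add: power3_eq_cube)

lemma walsh4_Qfun:
  assumes "\<alpha> \<in> T" "\<beta> = \<alpha> ^ 2"
  shows "walsh4 n (\<lambda>y. Qfun n e m k c \<alpha> \<beta> (inv_into T \<mu> y)) w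
    = (\<Sum>y\<in>UNIV. i_pow_Q n e m k c (\<mu> \<alpha>) y * minus_one_pow (ftr n (w * y)))"
proof -
  have "\<i> ^ nat (Qfun n e m k c \<alpha> \<beta> (inv_into T \<mu> y) mod 4) = i_pow_Q n e m k c (\<mu> \<alpha>) y" for y
  proof -
    define x where "x = inv_into T \<mu> y"
    have "\<alpha> * x \<in> T"
      using teich_mult[OF assms(1) teich_lift(1)] by (simp add: x_def)
    moreover have "\<mu> (if b then 1 else 0) = (if b then 1 else 0)" for b
      by (simp add: mu_1)
    ultimately show ?thesis
      unfolding Qfun_def x_def[symmetric] i_pow_Q_def quad_part_def
      by (simp add: i_pow_GTr mu_sum mu_mult mu_power assms(2) x_def teich_lift(2))
  qed
  then show ?thesis
    by (simp add: walsh4_def minus_one_pow_def)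
qed

end

theorem theorem3:
  fixes \<mu> :: "'r::{comm_ring_1,finite} \<Rightarrow> 'f::{field,finite}"
    and n e m k :: nat and c :: "nat \<Rightarrow> bool" and \<alpha> \<beta> :: 'r
  assumes GR: "is_GR4 n TYPE('r)"
    and F: "card (UNIV::'f set) = 2 ^ n"
    and hom: "\<mu> 1 = 1" "\<And>x y. \<mu> (x + y) = \<mu> x + \<mu> y" "\<And>x y. \<mu> (x * y) = \<mu> x * \<mu> y"
    and surj: "surj \<mu>"
    and nem: "n = e * m" and "e \<ge> 1" "m \<ge> 1" and "k \<ge> 1"
    and \<alpha>: "\<alpha> \<in> teich_star n e" and \<beta>: "\<beta> \<in> teich_star n e" and "\<beta> = \<alpha> ^ 2"
  shows "quaternary_bent n (\<lambda>y. Qfun n e m k c \<alpha> \<beta> (inv_into (teich n) \<mu> y))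
     \<longleftrightarrow> coprime (pcompose (cpoly m c) (monom 1 k)) ([:-1:] + monom 1 m)"
proof -
  interpret gr4_reduction n \<mu>
    using GR F hom surj by unfold_locales
  have "\<alpha> \<in> T" "\<alpha> \<noteq> 0" "\<alpha> ^ (2 ^ e) = \<alpha>"
    using \<alpha> by (auto simp: teich_star_def)
  then have "\<mu> \<alpha> \<noteq> 0" "\<mu> \<alpha> ^ (2 ^ e) = \<mu> \<alpha>"
    using teich_inj[OF _ teich_zero, of \<alpha>] by (auto simp: mu_power[symmetric])
  then show ?thesis
    unfolding quaternary_bent_def walsh4_Qfun[OF \<open>\<alpha> \<in> T\<close> \<open>\<beta> = \<alpha> ^ 2\<close>]
    by (rule i_pow_Q_bent_iff_coprime[OF _ _ nem \<open>e \<ge> 1\<close>])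
qed

end
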